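(* Let $n\ge3$. Let $\mathcal M=(G,\{1\},\{1\},\emptyset)$ be a strongly connected linear compartmental model with $n-1$ compartments, input and output in compartment $1$, and no leaks. Let $H$ be obtained from $G$ by adding a leaf edge at compartment $1$ (new compartment $n$, edges $1\to n$ with parameter $a_{n1}$ and $n\to1$ with parameter $a_{1n}$), and let $\mathcal M'=(H,\{n\},\{1\},\emptyset)$. Let $A$ and $A'$ be the compartmental matrices of $\mathcal M$ and $\mathcal M'$. Define $c_0,\dots,c_{n-1}$ and $d_0,\dots,d_{n-2}$ by $\det(\lambda I-A)=\sum_{i=0}^{n-1}c_i\lambda^i$ and $\det((\lambda I-A)^{1,1})=\sum_{i=0}^{n-2}d_i\lambda^i$ (so $c_{n-1}=d_{n-2}=1$), and define $c^*_0,\dots,c^*_{n-1}$ and $d^*_0,\dots,d^*_{n-2}$ by $\det(\lambda I-A')=\lambda^n+\sum_{i=0}^{n-1}c^*_i\lambda^i$ and $\det((\lambda I-A')^{n,1})=\sum_{i=0}^{n-2}d^*_i\lambda^i$. Then: (1) (i) $d^*_i=(-1)^{n-1}a_{1n}d_i$ for $i=0,\dots,n-2$; (ii) $c^*_i=c_{i-1}+a_{1n}c_i+a_{n1}d_{i-1}$ for $i=1,\dots,n-1$; (iii) $c^*_0=c_0=0$. (2) If $c_{\mathcal M}$ and $c_{\mathcal M'}$ denote the coefficient maps of $\mathcal M$ and $\mathcal M'$, then the rank of the Jacobian matrix of $c_{\mathcal M'}$ at a generic point equals $2$ plus the rank of the Jacobian matrix of $c_{\mathcal M}$ at a generic point.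
   Context: A linear compartmental model $\mathcal M=(G,In,Out,Leak)$ consists of a finite directed graph $G=(V_G,E_G)$ without multi-edges, compartments $V_G=\{1,\dots,n\}$, and subsets $In,Out,Leak\subseteq V_G$; edge $j\to i$ carries parameter $a_{ij}$ and each $i\in Leak$ carries $a_{0i}$. The compartmental matrix $A$ has $A_{ii}=-\sum_{k:\,i\to k\in E_G}a_{ki}$ (minus $a_{0i}$ if $i\in Leak$), $A_{ij}=a_{ij}$ if $j\to i\in E_G$, $0$ otherwise. $B^{i,j}$ denotes $B$ with row $i$ and column $j$ removed. The input-output equations are $\det(\partial I-A)y_i=\sum_{j\in In}(-1)^{i+j}\det((\partial I-A)^{j,i})u_j$ ($i\in Out$), $\partial I$ the diagonal matrix of $d/dt$'s; the coefficient map sends the parameter vector in $\mathbb R^{|E_G|+|Leak|}$ to the vector of all non-constant coefficients (polynomials in the parameters) of these equations. Adding a leaf edge at $i$ to a graph with vertex set $\{1,\dots,n-1\}$ gives the graph with vertex set $\{1,\dots,n\}$ and edge set $E_G\cup\{i\to n,n\to i\}$. *)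

theory Defs
  imports "Jordan_Normal_Form.Char_Poly" "Jordan_Normal_Form.DL_Rank"
          "HOL-Library.Product_Lexorder" "HOL-Analysis.Derivative"
begin

text \<open>Compartments are the natural numbers 1..n.  A directed edge
  j -> i is the pair (j, i); the edge set E is a set of such pairs.  A parameter
  vector is a function p :: nat * nat => real: the parameter a_ij of the edge
  j -> i is p (j, i), and the leak parameter a_0i of compartment i is p (i, 0)
  (think of a leak as an edge i -> 0).  Only the values of p on
  lcm_params E Leak matter.\<close>

type_synonym params = "nat \<times> nat \<Rightarrow> real"

definition lcm_graph :: "nat \<Rightarrow> (nat \<times> nat) set \<Rightarrow> bool" where
  "lcm_graph n E \<longleftrightarrow> E \<subseteq> {1..n} \<times> {1..n} \<and> (\<forall>i. (i, i) \<notin> E)"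

definition strongly_connected :: "nat \<Rightarrow> (nat \<times> nat) set \<Rightarrow> bool" where
  "strongly_connected n E \<longleftrightarrow> (\<forall>i\<in>{1..n}. \<forall>j\<in>{1..n}. (i, j) \<in> E\<^sup>*)"

definition add_leaf_edge :: "nat \<Rightarrow> (nat \<times> nat) set \<Rightarrow> nat \<Rightarrow> (nat \<times> nat) set" where
  "add_leaf_edge n E i = E \<union> {(i, n), (n, i)}"

definition lcm_params :: "(nat \<times> nat) set \<Rightarrow> nat set \<Rightarrow> (nat \<times> nat) set" where
  "lcm_params E Leak = E \<union> {(i, 0) | i. i \<in> Leak}"

text \<open>The compartmental matrix A (n x n; entry (i,j) of the paper is the
  JNF entry (i-1, j-1)).\<close>
definition comp_matrix :: "nat \<Rightarrow> (nat \<times> nat) set \<Rightarrow> nat set \<Rightarrow> params \<Rightarrow> real mat" where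
  "comp_matrix n E Leak p = Matrix.mat n n (\<lambda>(r, c).
     let i = Suc r; j = Suc c in
     if i = j then - (\<Sum>k\<in>{k. (i, k) \<in> E}. p (i, k)) - (if i \<in> Leak then p (i, 0) else 0)
     else if (j, i) \<in> E then p (j, i) else 0)"

text \<open>det(lambda I - A) is char_poly A; (lambda I - A)^{j,i} (row j and
  column i removed) is mat_delete (char_poly_matrix A) (j-1) (i-1).\<close>
definition minor_poly :: "real mat \<Rightarrow> nat \<Rightarrow> nat \<Rightarrow> real poly" where
  "minor_poly A j i = det (mat_delete (char_poly_matrix A) (j - 1) (i - 1))"

text \<open>Key (i, 0, k): coefficient of
  the k-th derivative of y_i in the equation for output i; key (i, j, k) with
  j >= 1: coefficient of the k-th derivative of u_j in the equation for output i.\<close>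
definition io_coef :: "nat \<Rightarrow> (nat \<times> nat) set \<Rightarrow> nat set \<Rightarrow> nat \<times> nat \<times> nat \<Rightarrow> params \<Rightarrow> real" where
  "io_coef n E Leak key p = (case key of (i, j, k) \<Rightarrow>
     if j = 0 then coeff (char_poly (comp_matrix n E Leak p)) k
     else (-1) ^ (i + j) * coeff (minor_poly (comp_matrix n E Leak p) j i) k)"

definition io_keys :: "nat \<Rightarrow> nat set \<Rightarrow> nat set \<Rightarrow> (nat \<times> nat \<times> nat) set" where
  "io_keys n In Out = {(i, 0, k) | i k. i \<in> Out \<and> k \<le> n} \<union>
                      {(i, j, k) | i j k. i \<in> Out \<and> j \<in> In \<and> k < n}"

definition nonconst_keys :: "nat \<Rightarrow> (nat \<times> nat) set \<Rightarrow> nat set \<Rightarrow> nat set \<Rightarrow> nat set \<Rightarrow> (nat \<times> nat \<times> nat) set" where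
  "nonconst_keys n E In Out Leak =
     {key \<in> io_keys n In Out. \<exists>p q. io_coef n E Leak key p \<noteq> io_coef n E Leak key q}"

definition coef_jacobian :: "nat \<Rightarrow> (nat \<times> nat) set \<Rightarrow> nat set \<Rightarrow> nat set \<Rightarrow> nat set \<Rightarrow> params \<Rightarrow> real mat" where
  "coef_jacobian n E In Out Leak p =
     (let ks = sorted_list_of_set (nonconst_keys n E In Out Leak);
          es = sorted_list_of_set (lcm_params E Leak)
      in Matrix.mat (length ks) (length es) (\<lambda>(r, c).
           deriv (\<lambda>t. io_coef n E Leak (ks ! r) (p (es ! c := t))) (p (es ! c))))"

definition jacobian_rank :: "nat \<Rightarrow> (nat \<times> nat) set \<Rightarrow> nat set \<Rightarrow> nat set \<Rightarrow> nat set \<Rightarrow> params \<Rightarrow> nat" where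
  "jacobian_rank n E In Out Leak p =
     vec_space.rank (card (nonconst_keys n E In Out Leak)) (coef_jacobian n E In Out Leak p)"

text \<open>Rank of the Jacobian at a generic point = maximal rank over all parameter
  points (the coefficients are polynomial in the parameters).\<close>
definition generic_jacobian_rank :: "nat \<Rightarrow> (nat \<times> nat) set \<Rightarrow> nat set \<Rightarrow> nat set \<Rightarrow> nat set \<Rightarrow> nat" where
  "generic_jacobian_rank n E In Out Leak = Max (range (jacobian_rank n E In Out Leak))"

end

theory Submission
  imports Defs "HOL-Analysis.Weierstrass_Theorems"
begin

text \<open>Expanding det(xI - A') along the row of the leaf n gives
  det(xI - A') = (x + a_1n) det(xI - A) + a_n1 x det((xI - A)^{1,1}), and expanding the minor
  (xI - A')^{n,1} along the column of n gives (-1)^(n-1) a_1n det((xI - A)^{1,1}).  This is part (1),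
  together with c_0 = det(-A) = 0, which holds because without leaks the columns of A sum to zero.

  For part (2) compare the Jacobian columns, which are indexed by parameters.  For an old edge the
  column of M' is the image of the column of M under a fixed linear map, so linear relations among
  old columns persist and the two new parameters raise the rank by at most 2.  The new columns are
  the coefficient vectors of (x d(x), 0) for a_n1 and of (c(x), d(x)) for a_1n.  If a_1n and
  d(-a_1n) are nonzero, a relation involving them yields (x + a_1n) G(x) + a x d(x) = 0 for the
  corresponding combination G of old columns; evaluating at x = -a_1n kills the new coefficients,
  leaving a relation among the columns of M.  As M does not involve a_1n, every parameter point
  can be moved to such a point by changing a_1n alone, so the generic ranks differ by exactly 2.\<close>

unbundle no vec_syntax

section \<open>Rank of a family of vectors\<close>

definition lin_indep_family :: "'k set \<Rightarrow> 'l set \<Rightarrow> ('l \<Rightarrow> 'k \<Rightarrow> 'a::field) \<Rightarrow> bool" where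
  "lin_indep_family K I v \<longleftrightarrow>
     (\<forall>c. (\<forall>k\<in>K. (\<Sum>l\<in>I. c l * v l k) = 0) \<longrightarrow> (\<forall>l\<in>I. c l = 0))"

definition family_rank :: "'k set \<Rightarrow> 'l set \<Rightarrow> ('l \<Rightarrow> 'k \<Rightarrow> 'a::field) \<Rightarrow> nat" where
  "family_rank K L v = Max {card I | I. I \<subseteq> L \<and> lin_indep_family K I v}"

lemma lin_indep_family_empty [simp]: "lin_indep_family K {} v"
  unfolding lin_indep_family_def by simp

lemma lin_indep_family_subset:
  assumes "lin_indep_family K I v" "J \<subseteq> I" "finite I"
  shows "lin_indep_family K J v"
  unfolding lin_indep_family_def
proof (intro allI impI ballI)
  fix c l assume rel: "\<forall>k\<in>K. (\<Sum>l\<in>J. c l * v l k) = 0" and l: "l \<in> J"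
  define c' where "c' l = (if l \<in> J then c l else 0)" for l
  have "(\<Sum>l\<in>I. c' l * v l k) = (\<Sum>l\<in>J. c' l * v l k)" for k
    using assms(2,3) by (intro sum.mono_neutral_right) (auto simp: c'_def)
  also have "(\<Sum>l\<in>J. c' l * v l k) = (\<Sum>l\<in>J. c l * v l k)" for k
    by (simp add: c'_def)
  finally have "\<forall>k\<in>K. (\<Sum>l\<in>I. c' l * v l k) = 0" using rel by simp
  then have "c' l = 0" using assms(1,2) l unfolding lin_indep_family_def by blast
  then show "c l = 0" using l by (simp add: c'_def)
qed

lemma family_rank_candidates_finite:
  "finite L \<Longrightarrow> finite {card I | I. I \<subseteq> L \<and> lin_indep_family K I v}"
  by (rule finite_subset[of _ "card ` Pow L"]) auto

lemma family_rank_ge: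
  assumes "finite L" "I \<subseteq> L" "lin_indep_family K I v"
  shows "card I \<le> family_rank K L v"
  unfolding family_rank_def using assms family_rank_candidates_finite[OF assms(1)]
  by (intro Max_ge) auto

lemma family_rank_witness:
  assumes "finite L"
  obtains I where "I \<subseteq> L" "lin_indep_family K I v" "card I = family_rank K L v"
proof -
  have "family_rank K L v \<in> {card I | I. I \<subseteq> L \<and> lin_indep_family K I v}"
    unfolding family_rank_def using family_rank_candidates_finite[OF assms]
    by (intro Max_in) auto
  then show ?thesis using that by auto
qed

lemma family_rank_le_card: "finite L \<Longrightarrow> family_rank K L v \<le> card L"
  by (metis family_rank_witness card_mono)

lemma family_rank_cong:
  assumes "\<And>l k. l \<in> L \<Longrightarrow> k \<in> K \<Longrightarrow> v l k = w l k"
  shows "family_rank K L v = family_rank K L w"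
proof -
  have "lin_indep_family K I v = lin_indep_family K I w" if "I \<subseteq> L" for I
    unfolding lin_indep_family_def using assms that by (simp add: subset_iff cong: sum.cong)
  then show ?thesis unfolding family_rank_def by metis
qed

lemma family_rank_zero_coordinates:
  assumes "K \<subseteq> K'" "\<And>l k. l \<in> L \<Longrightarrow> k \<in> K' - K \<Longrightarrow> v l k = 0"
  shows "family_rank K L v = family_rank K' L v"
proof -
  have "lin_indep_family K I v = lin_indep_family K' I v" if "I \<subseteq> L" for I
  proof -
    have "(\<Sum>l\<in>I. c l * v l k) = 0" if "k \<in> K' - K" for c k
      using assms(2) \<open>I \<subseteq> L\<close> that by (intro sum.neutral) auto
    then show ?thesis unfolding lin_indep_family_def using assms(1) by blast
  qed
  then show ?thesis unfolding family_rank_def by metis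
qed

lemma family_rank_union_le:
  assumes L: "finite L" and X: "finite X"
    and relations: "\<And>I c. I \<subseteq> L \<Longrightarrow> \<forall>k\<in>K. (\<Sum>l\<in>I. c l * v l k) = 0 \<Longrightarrow>
                           \<forall>k\<in>K'. (\<Sum>l\<in>I. c l * w l k) = 0"
  shows "family_rank K' (L \<union> X) w \<le> family_rank K L v + card X"
proof -
  obtain J where J: "J \<subseteq> L \<union> X" "lin_indep_family K' J w" "card J = family_rank K' (L \<union> X) w"
    using family_rank_witness[OF finite_UnI[OF L X]] by blast
  have fin_J: "finite J" using J(1) L X finite_subset by blast
  have "lin_indep_family K' (J - X) w"
    using lin_indep_family_subset[OF J(2) _ fin_J] by blast
  then have "lin_indep_family K (J - X) v"
    using relations[of "J - X"] J(1) unfolding lin_indep_family_def by blast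
  then have "card (J - X) \<le> family_rank K L v"
    using family_rank_ge[OF L] J(1) by blast
  moreover have "card J \<le> card (J - X) + card X"
  proof -
    have "card J \<le> card ((J - X) \<union> X)" using fin_J X by (intro card_mono) auto
    also have "\<dots> \<le> card (J - X) + card X" by (rule card_Un_le)
    finally show ?thesis .
  qed
  ultimately show ?thesis using J(3) by simp
qed

lemma family_rank_insert2_ge:
  assumes L: "finite L" and xy: "x \<notin> L" "y \<notin> L" "x \<noteq> y"
    and I: "I \<subseteq> L" "lin_indep_family K I v"
    and relations: "\<And>c a b. \<forall>k\<in>K'. (\<Sum>l\<in>I. c l * w l k) + a * w x k + b * w y k = 0 \<Longrightarrow>
                             a = 0 \<and> b = 0 \<and> (\<forall>k\<in>K. (\<Sum>l\<in>I. c l * v l k) = 0)"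
  shows "card I + 2 \<le> family_rank K' (L \<union> {x, y}) w"
proof -
  have fin_I: "finite I" using I(1) L finite_subset by blast
  have xy_I: "x \<notin> I" "y \<notin> I" using xy I(1) by auto
  have "lin_indep_family K' (insert x (insert y I)) w"
    unfolding lin_indep_family_def
  proof (intro allI impI)
    fix c assume "\<forall>k\<in>K'. (\<Sum>l\<in>insert x (insert y I). c l * w l k) = 0"
    then have "\<forall>k\<in>K'. (\<Sum>l\<in>I. c l * w l k) + c x * w x k + c y * w y k = 0"
      using fin_I xy_I xy(3) by (simp add: algebra_simps)
    from relations[OF this] I(2) show "\<forall>l\<in>insert x (insert y I). c l = 0"
      unfolding lin_indep_family_def by auto
  qed
  moreover have "card (insert x (insert y I)) = card I + 2"
    using fin_I xy_I xy(3) by simp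
  ultimately show ?thesis
    using family_rank_ge[of "L \<union> {x, y}" "insert x (insert y I)"] L I(1) by fastforce
qed

lemma (in vec_space) lin_indpt_iff_coordinates:
  assumes "finite T" "T \<subseteq> carrier_vec n"
  shows "lin_indpt T \<longleftrightarrow> (\<forall>a. (\<forall>i<n. (\<Sum>x\<in>T. a x * x $ i) = 0) \<longrightarrow> (\<forall>x\<in>T. a x = 0))"
proof -
  have lincomb_zero_iff: "lincomb a T = 0\<^sub>v n \<longleftrightarrow> (\<forall>i<n. (\<Sum>x\<in>T. a x * x $ i) = 0)" for a
  proof
    assume "lincomb a T = 0\<^sub>v n"
    then show "\<forall>i<n. (\<Sum>x\<in>T. a x * x $ i) = 0"
      using lincomb_index[OF _ assms(2)] by (metis index_zero_vec(1))
  qed (auto simp: lincomb_index[OF _ assms(2)] lincomb_dim[OF assms])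
  show ?thesis
  proof
    assume indpt: "lin_indpt T"
    show "\<forall>a. (\<forall>i<n. (\<Sum>x\<in>T. a x * x $ i) = 0) \<longrightarrow> (\<forall>x\<in>T. a x = 0)"
    proof (intro allI impI ballI, rule ccontr)
      fix a x assume "\<forall>i<n. (\<Sum>x\<in>T. a x * x $ i) = 0" "x \<in> T" "a x \<noteq> 0"
      then show False
        using indpt lincomb_zero_iff lin_dep_crit[OF assms(1) subset_refl _ \<open>x \<in> T\<close>] by auto
    qed
  next
    assume coords: "\<forall>a. (\<forall>i<n. (\<Sum>x\<in>T. a x * x $ i) = 0) \<longrightarrow> (\<forall>x\<in>T. a x = 0)"
    show "lin_indpt T"
    proof
      assume "lin_dep T"
      then obtain a w where "lincomb a T = 0\<^sub>v n" "w \<in> T" "a w \<noteq> 0"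
        using finite_lin_dep[OF assms(1)] assms(2) by auto
      with coords lincomb_zero_iff show False by blast
    qed
  qed
qed

lemma lin_indep_family_inj:
  fixes v :: "'l \<Rightarrow> 'k \<Rightarrow> 'a::field"
  assumes indep: "lin_indep_family K I v" and I: "finite I" "l1 \<in> I" "l2 \<in> I"
    and same: "\<forall>k\<in>K. v l1 k = v l2 k"
  shows "l1 = l2"
proof (rule ccontr)
  assume "l1 \<noteq> l2"
  define c :: "'l \<Rightarrow> 'a" where "c l = (if l = l1 then 1 else if l = l2 then -1 else 0)" for l
  have "(\<Sum>l\<in>I. c l * v l k) = 0" if "k \<in> K" for k
  proof -
    have "(\<Sum>l\<in>I. c l * v l k) = (\<Sum>l\<in>{l1, l2}. c l * v l k)"
      using I by (intro sum.mono_neutral_right) (auto simp: c_def)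
    also have "\<dots> = v l1 k - v l2 k"
      using \<open>l1 \<noteq> l2\<close> by (simp add: c_def)
    finally show ?thesis using same that by simp
  qed
  then have "c l1 = 0" using indep I(2) unfolding lin_indep_family_def by blast
  then show False by (simp add: c_def)
qed

lemma (in vec_space) lin_indep_family_iff_lin_indpt:
  fixes v :: "'l \<Rightarrow> 'k \<Rightarrow> 'a"
  assumes I: "finite I" and ks: "length ks = n"
  defines "\<psi> \<equiv> \<lambda>l. Matrix.vec n (\<lambda>r. v l (ks ! r))"
  shows "lin_indep_family (set ks) I v \<longleftrightarrow> inj_on \<psi> I \<and> lin_indpt (\<psi> ` I)"
proof -
  have all_coords: "(\<forall>k\<in>set ks. P k) \<longleftrightarrow> (\<forall>r<n. P (ks ! r))" for P
    by (metis in_set_conv_nth ks)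
  have reindex: "(\<Sum>x\<in>\<psi> ` I. a x * x $ r) = (\<Sum>l\<in>I. a (\<psi> l) * v l (ks ! r))"
    if "inj_on \<psi> I" "r < n" for a r
    using that by (simp add: sum.reindex \<psi>_def)
  have indpt_iff: "lin_indpt (\<psi> ` I) \<longleftrightarrow>
      (\<forall>a. (\<forall>r<n. (\<Sum>x\<in>\<psi> ` I. a x * x $ r) = 0) \<longrightarrow> (\<forall>x\<in>\<psi> ` I. a x = 0))"
    using I by (intro lin_indpt_iff_coordinates) (auto simp: \<psi>_def)
  show ?thesis
  proof
    assume indep: "lin_indep_family (set ks) I v"
    have inj: "inj_on \<psi> I"
    proof (rule inj_onI)
      fix l1 l2 assume "l1 \<in> I" "l2 \<in> I" "\<psi> l1 = \<psi> l2"
      then have "\<forall>k\<in>set ks. v l1 k = v l2 k"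
        unfolding all_coords by (metis \<psi>_def index_vec)
      then show "l1 = l2" using lin_indep_family_inj[OF indep I] \<open>l1 \<in> I\<close> \<open>l2 \<in> I\<close> by blast
    qed
    have "\<forall>x\<in>\<psi> ` I. a x = 0" if "\<forall>r<n. (\<Sum>x\<in>\<psi> ` I. a x * x $ r) = 0" for a
    proof -
      have "\<forall>k\<in>set ks. (\<Sum>l\<in>I. (a \<circ> \<psi>) l * v l k) = 0"
        unfolding all_coords using that by (simp add: reindex[OF inj])
      then show ?thesis using indep unfolding lin_indep_family_def by auto
    qed
    with inj indpt_iff show "inj_on \<psi> I \<and> lin_indpt (\<psi> ` I)" by blast
  next
    assume "inj_on \<psi> I \<and> lin_indpt (\<psi> ` I)"
    then have inj: "inj_on \<psi> I" and indpt: "lin_indpt (\<psi> ` I)" by auto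
    show "lin_indep_family (set ks) I v"
      unfolding lin_indep_family_def
    proof (intro allI impI ballI)
      fix c l assume rel: "\<forall>k\<in>set ks. (\<Sum>l\<in>I. c l * v l k) = 0" and l: "l \<in> I"
      define a where "a = c \<circ> inv_into I \<psi>"
      have a_\<psi>: "a (\<psi> l) = c l" if "l \<in> I" for l
        using inj that by (simp add: a_def)
      have "\<forall>r<n. (\<Sum>x\<in>\<psi> ` I. a x * x $ r) = 0"
        using rel unfolding all_coords by (simp add: reindex[OF inj] a_\<psi> cong: sum.cong)
      then show "c l = 0" using indpt indpt_iff l a_\<psi> by auto
    qed
  qed
qed

lemma (in vec_space) rank_eq_family_rank:
  assumes A: "A \<in> carrier_mat n nc" and L: "finite L" and cols: "set (cols A) = \<psi> ` L"
    and indep_iff: "\<And>I. I \<subseteq> L \<Longrightarrow> lin_indep_family K I v \<longleftrightarrow> inj_on \<psi> I \<and> lin_indpt (\<psi> ` I)"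
  shows "rank A = family_rank K L v"
proof (rule antisym)
  have "lin_indpt {}" using indep_iff[of "{}"] by simp
  then obtain S where S: "maximal S (\<lambda>T. T \<subseteq> set (cols A) \<and> lin_indpt T)"
    using maximal_exists_superset[of "set (cols A)" "\<lambda>T. T \<subseteq> set (cols A) \<and> lin_indpt T" "{}"]
    by auto
  then have S_cols: "S \<subseteq> \<psi> ` L" and S_indpt: "lin_indpt S"
    using cols unfolding maximal_def by auto
  define I where "I = inv_into L \<psi> ` S"
  have \<psi>_I: "\<psi> ` I = S"
    unfolding I_def image_image using S_cols by (auto simp: f_inv_into_f subset_iff)
  have I_L: "I \<subseteq> L"
    unfolding I_def using S_cols by (auto intro: inv_into_into)
  have inj: "inj_on \<psi> I"
    unfolding I_def using S_cols by (intro inj_onI) (auto simp: f_inv_into_f subset_iff)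
  have "lin_indep_family K I v"
    using indep_iff[OF I_L] inj \<psi>_I S_indpt by auto
  then have "card I \<le> family_rank K L v"
    using family_rank_ge[OF L I_L] by auto
  then show "rank A \<le> family_rank K L v"
    using rank_card_indpt[OF A S] card_image[OF inj] \<psi>_I by simp
next
  obtain I where I: "I \<subseteq> L" "lin_indep_family K I v" "card I = family_rank K L v"
    using family_rank_witness[OF L] by blast
  then have "inj_on \<psi> I" "lin_indpt (\<psi> ` I)"
    using indep_iff by auto
  moreover have "\<psi> ` I \<subseteq> set (cols A)" using cols I(1) by auto
  ultimately have "card (\<psi> ` I) \<le> rank A" by (intro rank_ge_card_indpt[OF A])
  with \<open>inj_on \<psi> I\<close> I(3) show "family_rank K L v \<le> rank A" by (simp add: card_image)
qed

lemma rank_mat_eq_family_rank: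
  fixes v :: "'l \<Rightarrow> 'k \<Rightarrow> 'a::field"
  shows "vec_space.rank (length ks) (Matrix.mat (length ks) (length es) (\<lambda>(r, c). v (es ! c) (ks ! r)))
         = family_rank (set ks) (set es) v"
proof -
  interpret V: vec_space "TYPE('a)" "length ks" .
  let ?\<psi> = "\<lambda>l. Matrix.vec (length ks) (\<lambda>r. v l (ks ! r))"
  show ?thesis
  proof (rule V.rank_eq_family_rank[where \<psi> = ?\<psi> and nc = "length es"])
    show "set (cols (Matrix.mat (length ks) (length es) (\<lambda>(r, c). v (es ! c) (ks ! r)))) = ?\<psi> ` set es"
      by (force simp: cols_def in_set_conv_nth)
    show "lin_indep_family (set ks) I v \<longleftrightarrow> inj_on ?\<psi> I \<and> V.lin_indpt (?\<psi> ` I)"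
      if "I \<subseteq> set es" for I
      by (rule V.lin_indep_family_iff_lin_indpt[OF finite_subset[OF that List.finite_set] refl])
  qed simp_all
qed

section \<open>Polynomial dependence on a single parameter\<close>

lemma real_polynomial_function_if:
  "real_polynomial_function f \<Longrightarrow> real_polynomial_function g \<Longrightarrow>
   real_polynomial_function (\<lambda>t. if b then f t else g t)"
  by (cases b) auto

lemma real_polynomial_function_sum':
  "(\<And>i. i \<in> I \<Longrightarrow> real_polynomial_function (\<lambda>t. f t i)) \<Longrightarrow>
   real_polynomial_function (\<lambda>t. sum (f t) I)"
  by (cases "finite I") auto

lemma has_real_derivative_polynomial_function:
  "real_polynomial_function f \<Longrightarrow> (f has_real_derivative deriv f x) (at x)"
  by (simp add: DERIV_deriv_iff_real_differentiable differentiable_at_real_polynomial_function)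

definition polynomial_coeffs :: "(real \<Rightarrow> real poly) \<Rightarrow> bool" where
  "polynomial_coeffs F \<longleftrightarrow> (\<forall>k. real_polynomial_function (\<lambda>t. coeff (F t) k))"

lemma polynomial_coeffs_const: "polynomial_coeffs (\<lambda>t. P)"
  unfolding polynomial_coeffs_def by auto

lemma polynomial_coeffs_const_poly:
  assumes "real_polynomial_function f"
  shows "polynomial_coeffs (\<lambda>t. [:f t:])"
  unfolding polynomial_coeffs_def
proof
  show "real_polynomial_function (\<lambda>t. coeff [:f t:] k)" for k
    using assms by (cases k) auto
qed

lemma polynomial_coeffs_add:
  "polynomial_coeffs F \<Longrightarrow> polynomial_coeffs G \<Longrightarrow> polynomial_coeffs (\<lambda>t. F t + G t)"
  by (auto simp: polynomial_coeffs_def)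

lemma polynomial_coeffs_mult:
  "polynomial_coeffs F \<Longrightarrow> polynomial_coeffs G \<Longrightarrow> polynomial_coeffs (\<lambda>t. F t * G t)"
  unfolding polynomial_coeffs_def coeff_mult by (intro allI real_polynomial_function_sum) auto

lemma polynomial_coeffs_sum:
  "(\<And>i. i \<in> S \<Longrightarrow> polynomial_coeffs (\<lambda>t. F t i)) \<Longrightarrow> polynomial_coeffs (\<lambda>t. \<Sum>i\<in>S. F t i)"
  by (induction S rule: infinite_finite_induct)
     (auto intro: polynomial_coeffs_add simp: polynomial_coeffs_const)

lemma polynomial_coeffs_prod:
  "(\<And>i. i \<in> S \<Longrightarrow> polynomial_coeffs (\<lambda>t. F t i)) \<Longrightarrow> polynomial_coeffs (\<lambda>t. \<Prod>i\<in>S. F t i)"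
  by (induction S rule: infinite_finite_induct)
     (auto intro: polynomial_coeffs_mult simp: polynomial_coeffs_const)

lemma polynomial_coeffs_det:
  assumes "\<And>t. M t \<in> carrier_mat m m"
    and "\<And>i j. i < m \<Longrightarrow> j < m \<Longrightarrow> polynomial_coeffs (\<lambda>t. M t $$ (i, j))"
  shows "polynomial_coeffs (\<lambda>t. det (M t))"
proof -
  have "polynomial_coeffs (\<lambda>t. \<Sum>\<pi> | \<pi> permutes {0..<m}. signof \<pi> * (\<Prod>i = 0..<m. M t $$ (i, \<pi> i)))"
    using assms(2)
    by (intro polynomial_coeffs_sum polynomial_coeffs_mult polynomial_coeffs_prod polynomial_coeffs_const)
       (auto simp: permutes_def)
  then show ?thesis using det_def'[OF assms(1)] by simp
qed

lemma comp_matrix_carrier [simp]: "comp_matrix N E Leak p \<in> carrier_mat N N"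
  by (simp add: comp_matrix_def)

lemma mat_delete_index':
  "i < dim_row A - 1 \<Longrightarrow> j < dim_col A - 1 \<Longrightarrow>
   mat_delete A a b $$ (i, j) = A $$ (if i < a then i else Suc i, if j < b then j else Suc j)"
  by (simp add: mat_delete_def)

lemma real_polynomial_function_comp_matrix_entry:
  assumes "r < N" "c < N"
  shows "real_polynomial_function (\<lambda>t. comp_matrix N E Leak (p(l := t)) $$ (r, c))"
proof -
  have upd: "real_polynomial_function (\<lambda>t. (p(l := t)) e)" for e
    by (cases "e = l") (auto simp: real_polynomial_function_eq)
  show ?thesis
    using assms unfolding comp_matrix_def Let_def
    by (auto intro!: real_polynomial_function_if real_polynomial_function_sum' upd
        simp del: fun_upd_apply)
qed

lemma dim_char_poly_matrix_comp_matrix [simp]: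
  "dim_row (char_poly_matrix (comp_matrix N E Leak p)) = N"
  "dim_col (char_poly_matrix (comp_matrix N E Leak p)) = N"
  by (simp_all add: char_poly_matrix_def comp_matrix_def)

lemma char_poly_matrix_index:
  "A \<in> carrier_mat n n \<Longrightarrow> i < n \<Longrightarrow> j < n \<Longrightarrow>
   char_poly_matrix A $$ (i, j) = (if i = j then [:0, 1:] else 0) + [:- A $$ (i, j):]"
  unfolding char_poly_matrix_def by auto

lemma polynomial_coeffs_char_poly_matrix_comp_matrix:
  assumes "r < N" "c < N"
  shows "polynomial_coeffs (\<lambda>t. char_poly_matrix (comp_matrix N E Leak (p(l := t))) $$ (r, c))"
  unfolding char_poly_matrix_index[OF comp_matrix_carrier assms]
  by (intro polynomial_coeffs_add polynomial_coeffs_const polynomial_coeffs_const_poly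
      real_polynomial_function_minus real_polynomial_function_comp_matrix_entry assms)

lemma polynomial_coeffs_char_poly_comp_matrix:
  "polynomial_coeffs (\<lambda>t. char_poly (comp_matrix N E Leak (p(l := t))))"
  unfolding char_poly_def
  by (rule polynomial_coeffs_det[where m = N])
     (auto intro: polynomial_coeffs_char_poly_matrix_comp_matrix)

lemma polynomial_coeffs_minor_poly_comp_matrix:
  "polynomial_coeffs (\<lambda>t. minor_poly (comp_matrix N E Leak (p(l := t))) i j)"
  unfolding minor_poly_def
proof (rule polynomial_coeffs_det[where m = "N - 1"])
  show "mat_delete (char_poly_matrix (comp_matrix N E Leak (p(l := t)))) (i - 1) (j - 1)
        \<in> carrier_mat (N - 1) (N - 1)" for t
    by (rule mat_delete_carrier) simp
next
  fix r c assume rc: "r < N - 1" "c < N - 1"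
  have "polynomial_coeffs (\<lambda>t. char_poly_matrix (comp_matrix N E Leak (p(l := t))) $$
      (if r < i - 1 then r else Suc r, if c < j - 1 then c else Suc c))"
    using rc by (intro polynomial_coeffs_char_poly_matrix_comp_matrix) auto
  then show "polynomial_coeffs
      (\<lambda>t. mat_delete (char_poly_matrix (comp_matrix N E Leak (p(l := t)))) (i - 1) (j - 1) $$ (r, c))"
    using rc by (simp add: mat_delete_index')
qed

section \<open>Compartmental matrices and determinants\<close>

lemma comp_matrix_index:
  "r < N \<Longrightarrow> c < N \<Longrightarrow> comp_matrix N E {} p $$ (r, c) =
     (if r = c then - (\<Sum>k\<in>{k. (Suc r, k) \<in> E}. p (Suc r, k))
      else if (Suc c, Suc r) \<in> E then p (Suc c, Suc r) else 0)"
  by (simp add: comp_matrix_def)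

text \<open>Without leaks, the mass leaving compartment j is the mass arriving elsewhere.\<close>
lemma comp_matrix_column_sum:
  assumes G: "lcm_graph N E" and c: "c < N"
  shows "(\<Sum>r<N. comp_matrix N E {} p $$ (r, c)) = 0"
proof -
  define S where "S = {r. r < N \<and> r \<noteq> c \<and> (Suc c, Suc r) \<in> E}"
  have "k \<in> {k. (Suc c, k) \<in> E} \<longleftrightarrow> k \<in> Suc ` S" for k
  proof -
    have "(Suc c, k) \<in> E \<Longrightarrow> k \<in> {1..N} \<and> k \<noteq> Suc c"
      using G by (auto simp: lcm_graph_def)
    then show ?thesis by (cases k) (auto simp: S_def)
  qed
  then have targets: "{k. (Suc c, k) \<in> E} = Suc ` S" by blast
  have "(\<Sum>r<N. comp_matrix N E {} p $$ (r, c)) =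
      comp_matrix N E {} p $$ (c, c) + (\<Sum>r\<in>{..<N} - {c}. comp_matrix N E {} p $$ (r, c))"
    using c by (simp add: sum.remove)
  also have "(\<Sum>r\<in>{..<N} - {c}. comp_matrix N E {} p $$ (r, c)) =
      (\<Sum>r\<in>{..<N} - {c}. if r \<in> S then p (Suc c, Suc r) else 0)"
    using c by (intro sum.cong) (auto simp: comp_matrix_index S_def)
  also have "\<dots> = (\<Sum>r\<in>S. p (Suc c, Suc r))"
    by (rule sum.mono_neutral_cong_right) (auto simp: S_def)
  also have "\<dots> = (\<Sum>k\<in>{k. (Suc c, k) \<in> E}. p (Suc c, k))"
    by (simp add: targets sum.reindex)
  finally show ?thesis using c by (simp add: comp_matrix_index)
qed

lemma coeff_0_char_poly_comp_matrix:
  assumes G: "lcm_graph N E" and N: "0 < N"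
  shows "coeff (char_poly (comp_matrix N E {} p)) 0 = 0"
proof -
  define A where "A = comp_matrix N E {} p"
  have A: "A \<in> carrier_mat N N" by (simp add: A_def)
  have "(- A)\<^sup>T *\<^sub>v Matrix.vec N (\<lambda>_. 1) = 0\<^sub>v N"
  proof (rule eq_vecI)
    fix i assume "i < dim_vec (0\<^sub>v N :: real Matrix.vec)"
    then have i: "i < N" by simp
    have "((- A)\<^sup>T *\<^sub>v Matrix.vec N (\<lambda>_. 1)) $ i = - (\<Sum>r<N. A $$ (r, i))"
      using i A by (simp add: scalar_prod_def lessThan_atLeast0 row_def sum_negf)
    then show "((- A)\<^sup>T *\<^sub>v Matrix.vec N (\<lambda>_. 1)) $ i = 0\<^sub>v N $ i"
      using comp_matrix_column_sum[OF G i] i by (simp add: A_def)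
  qed (use A in simp)
  moreover have "Matrix.vec N (\<lambda>_. 1 :: real) \<noteq> 0\<^sub>v N"
    using N by (metis index_vec index_zero_vec(1) zero_neq_one)
  ultimately have singular: "det ((- A)\<^sup>T) = 0"
    using A by (subst det_0_iff_vec_prod_zero_field[of _ N]) (auto intro!: exI[of _ "Matrix.vec N (\<lambda>_. 1)"])
  have "char_matrix A 0 = A"
    using A by (intro eq_matI) (auto simp: char_matrix_def)
  then have "coeff (char_poly A) 0 = det ((- A)\<^sup>T)"
    using A by (simp add: poly_0_coeff_0[symmetric] char_poly_matrix det_transpose)
  with singular show ?thesis by (simp add: A_def)
qed

lemma det_add_corner:
  fixes A B :: "'a::comm_ring_1 mat"
  assumes A: "A \<in> carrier_mat n n" and B: "B \<in> carrier_mat n n" and n: "0 < n"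
    and agree: "\<And>i j. i < n \<Longrightarrow> j < n \<Longrightarrow> (i, j) \<noteq> (0, 0) \<Longrightarrow> A $$ (i, j) = B $$ (i, j)"
  shows "det A = det B + (A $$ (0, 0) - B $$ (0, 0)) * det (mat_delete B 0 0)"
proof -
  have "mat_delete A 0 j = mat_delete B 0 j" if "j < n" for j
    using A B agree by (intro eq_matI) (auto simp: mat_delete_index')
  then have cof: "cofactor A 0 j = cofactor B 0 j" if "j < n" for j
    using that by (simp add: cofactor_def)
  have "det A = (\<Sum>j<n. A $$ (0, j) * cofactor A 0 j)"
    by (rule laplace_expansion_row[OF A n])
  also have "\<dots> = (A $$ (0, 0) - B $$ (0, 0)) * cofactor B 0 0 + (\<Sum>j<n. B $$ (0, j) * cofactor B 0 j)"
  proof -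
    have "(\<Sum>j\<in>{..<n} - {0}. A $$ (0, j) * cofactor A 0 j) = (\<Sum>j\<in>{..<n} - {0}. B $$ (0, j) * cofactor B 0 j)"
      using agree cof by (intro sum.cong) auto
    then show ?thesis
      using n cof by (simp add: sum.remove[of _ 0] algebra_simps)
  qed
  also have "\<dots> = det B + (A $$ (0, 0) - B $$ (0, 0)) * det (mat_delete B 0 0)"
    by (simp add: laplace_expansion_row[OF B n] cofactor_def)
  finally show ?thesis .
qed

lemma laplace_expansion_column_single:
  fixes A :: "'a::comm_ring_1 mat"
  assumes A: "A \<in> carrier_mat n n" and "i < n" "j < n"
    and zero: "\<And>i'. i' < n \<Longrightarrow> i' \<noteq> i \<Longrightarrow> A $$ (i', j) = 0"
  shows "det A = A $$ (i, j) * cofactor A i j"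
proof -
  have "det A = (\<Sum>i'<n. A $$ (i', j) * cofactor A i' j)"
    by (rule laplace_expansion_column[OF A \<open>j < n\<close>])
  also have "\<dots> = A $$ (i, j) * cofactor A i j"
    using \<open>i < n\<close> zero by (subst sum.remove[of _ i]) auto
  finally show ?thesis .
qed

lemma poly_neg_one_power: "(-1 :: 'a::comm_ring_1 poly) ^ k = [:(-1) ^ k:]"
  by (induction k) (auto simp: one_pCons)

lemma mat_delete_char_poly_matrix:
  assumes "A \<in> carrier_mat n n" "i < n"
  shows "mat_delete (char_poly_matrix A) i i = char_poly_matrix (mat_delete A i i)"
  using assms by (intro eq_matI) (auto simp: mat_delete_index' char_poly_matrix_def)

section \<open>Jacobian rank as the rank of a family of partial derivatives\<close>

definition partial_deriv :: "(('a \<Rightarrow> real) \<Rightarrow> real) \<Rightarrow> ('a \<Rightarrow> real) \<Rightarrow> 'a \<Rightarrow> real" where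
  "partial_deriv f p l = deriv (\<lambda>t. f (p(l := t))) (p l)"

lemma partial_deriv_eqI:
  "((\<lambda>t. f (p(l := t))) has_real_derivative D) (at (p l)) \<Longrightarrow> partial_deriv f p l = D"
  unfolding partial_deriv_def by (rule DERIV_imp_deriv)

lemma partial_deriv_const:
  "(\<And>t. f (p(l := t)) = f p) \<Longrightarrow> partial_deriv f p l = 0"
  by (simp add: partial_deriv_def)

lemma has_real_derivative_partial_deriv:
  "real_polynomial_function (\<lambda>t. f (p(l := t))) \<Longrightarrow>
   ((\<lambda>t. f (p(l := t))) has_real_derivative partial_deriv f p l) (at (p l))"
  unfolding partial_deriv_def by (rule has_real_derivative_polynomial_function)

lemma comp_matrix_cong:
  "(\<And>e. e \<in> lcm_params E Leak \<Longrightarrow> p e = q e) \<Longrightarrow> comp_matrix N E Leak p = comp_matrix N E Leak q"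
  unfolding comp_matrix_def Let_def lcm_params_def
  by (intro cong_mat refl) (auto intro!: sum.cong)

lemma finite_io_keys: "finite In \<Longrightarrow> finite Out \<Longrightarrow> finite (io_keys n In Out)"
  by (rule finite_subset[of _ "Out \<times> insert 0 In \<times> {..n}"]) (auto simp: io_keys_def)

lemma jacobian_rank_eq_family_rank:
  assumes "finite (lcm_params E Leak)" "finite In" "finite Out"
  shows "jacobian_rank n E In Out Leak p =
    family_rank (io_keys n In Out) (lcm_params E Leak) (\<lambda>l key. partial_deriv (io_coef n E Leak key) p l)"
proof -
  let ?K = "nonconst_keys n E In Out Leak" and ?v = "\<lambda>l key. partial_deriv (io_coef n E Leak key) p l"
  have fin_K: "finite ?K"
    using finite_io_keys[OF assms(2,3)] by (rule finite_subset[rotated]) (auto simp: nonconst_keys_def)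
  have "jacobian_rank n E In Out Leak p = family_rank ?K (lcm_params E Leak) ?v"
    using rank_mat_eq_family_rank[where v = ?v and ks = "sorted_list_of_set ?K"
        and es = "sorted_list_of_set (lcm_params E Leak)"]
      fin_K assms(1)
    by (simp add: jacobian_rank_def coef_jacobian_def partial_deriv_def Let_def)
  also have "\<dots> = family_rank (io_keys n In Out) (lcm_params E Leak) ?v"
  proof (rule family_rank_zero_coordinates)
    show "?K \<subseteq> io_keys n In Out" by (auto simp: nonconst_keys_def)
  next
    fix l key assume "key \<in> io_keys n In Out - ?K"
    then have "io_coef n E Leak key q = io_coef n E Leak key p" for q
      by (auto simp: nonconst_keys_def)
    then show "?v l key = 0" by (intro partial_deriv_const) blast
  qed
  finally show ?thesis .
qed

lemma Max_range_eq_add: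
  fixes f g :: "'a \<Rightarrow> nat"
  assumes fin: "finite (range f)" and le: "\<And>x. g x \<le> f x + k" and ge: "\<And>x. \<exists>y. f x + k \<le> g y"
  shows "Max (range g) = Max (range f) + k"
proof -
  have bound: "g x \<le> Max (range f) + k" for x
    using le[of x] Max_ge[OF fin, of "f x"] by simp
  have fin_g: "finite (range g)"
    by (rule finite_subset[of _ "{..Max (range f) + k}"]) (use bound in auto)
  obtain x where "f x = Max (range f)"
    using Max_in[OF fin] by auto
  with ge[of x] obtain y where "Max (range f) + k \<le> g y" by auto
  then have "Max (range f) + k \<le> Max (range g)"
    using Max_ge[OF fin_g, of "g y"] by simp
  moreover have "Max (range g) \<le> Max (range f) + k"
    using bound fin_g by simp
  ultimately show ?thesis by simp
qed

section \<open>Adding a leaf edge\<close>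

text \<open>Compartment i is row and column i - 1 of a matrix, so the new compartment Suc N has index N.\<close>
locale leaf_extension =
  fixes N :: nat and E :: "(nat \<times> nat) set"
  assumes two_le_N: "2 \<le> N" and graph: "lcm_graph N E"
begin

definition H :: "(nat \<times> nat) set" where
  "H = add_leaf_edge (Suc N) E 1"

abbreviation A :: "params \<Rightarrow> real mat" where
  "A p \<equiv> comp_matrix N E {} p"

abbreviation A' :: "params \<Rightarrow> real mat" where
  "A' p \<equiv> comp_matrix (Suc N) H {} p"

lemma E_sub: "E \<subseteq> {1..N} \<times> {1..N}"
  using graph by (simp add: lcm_graph_def)

lemma finite_E: "finite E"
  using E_sub by (rule finite_subset) simp

lemma finite_out_neighbours: "finite {k. (i, k) \<in> E}"
  by (rule finite_subset[of _ "{1..N}"]) (use E_sub in auto)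

lemma new_vertex_notin_E: "(i, Suc N) \<notin> E" "(Suc N, i) \<notin> E"
  using E_sub by auto

lemma H_eq: "H = E \<union> {(1, Suc N), (Suc N, 1)}"
  by (simp add: H_def add_leaf_edge_def)

lemma A'_index_old:
  assumes "i < N" "j < N" "(i, j) \<noteq> (0, 0)"
  shows "A' p $$ (i, j) = A p $$ (i, j)"
proof -
  have "{k. (Suc i, k) \<in> H} = {k. (Suc i, k) \<in> E}" if "i = j"
    using that assms by (auto simp: H_eq)
  then show ?thesis
    using assms by (simp add: comp_matrix_index H_eq)
qed

lemma A'_index_corner: "A' p $$ (0, 0) = A p $$ (0, 0) - p (1, Suc N)"
proof -
  have "{k. (Suc 0, k) \<in> H} = insert (Suc N) {k. (Suc 0, k) \<in> E}"
    by (auto simp: H_eq)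
  then show ?thesis
    using two_le_N new_vertex_notin_E finite_out_neighbours by (simp add: comp_matrix_index)
qed

lemma A'_index_new_row:
  assumes "j \<le> N"
  shows "A' p $$ (N, j) = (if j = 0 then p (1, Suc N) else if j = N then - p (Suc N, 1) else 0)"
proof -
  have out: "{k. (Suc N, k) \<in> H} = {1}"
    using new_vertex_notin_E by (auto simp: H_eq)
  have into: "(Suc j', Suc N) \<in> H \<longleftrightarrow> j' = 0" for j'
    using new_vertex_notin_E by (auto simp: H_eq)
  show ?thesis
    using assms two_le_N by (simp add: comp_matrix_index out into)
qed

lemma A'_index_new_col:
  assumes "i < N"
  shows "A' p $$ (i, N) = (if i = 0 then p (Suc N, 1) else 0)"
proof -
  have "(Suc N, Suc i) \<in> H \<longleftrightarrow> i = 0"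
    using two_le_N new_vertex_notin_E by (auto simp: H_eq)
  then show ?thesis
    using assms by (simp add: comp_matrix_index)
qed

lemma char_poly_matrix_A'_index_old:
  "i < N \<Longrightarrow> j < N \<Longrightarrow> (i, j) \<noteq> (0, 0) \<Longrightarrow>
   char_poly_matrix (A' p) $$ (i, j) = char_poly_matrix (A p) $$ (i, j)"
  by (simp add: char_poly_matrix_index[OF comp_matrix_carrier] A'_index_old)

lemma char_poly_matrix_A'_index_corner:
  "char_poly_matrix (A' p) $$ (0, 0) = char_poly_matrix (A p) $$ (0, 0) + [:p (1, Suc N):]"
  using two_le_N by (simp add: char_poly_matrix_index[OF comp_matrix_carrier] A'_index_corner)

lemma char_poly_matrix_A'_index_new_row:
  "j \<le> N \<Longrightarrow> char_poly_matrix (A' p) $$ (N, j) =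
     (if j = 0 then [:- p (1, Suc N):] else if j = N then [:p (Suc N, 1), 1:] else 0)"
  using two_le_N by (simp add: char_poly_matrix_index[OF comp_matrix_carrier] A'_index_new_row)

lemma char_poly_matrix_A'_index_new_col:
  "i < N \<Longrightarrow> char_poly_matrix (A' p) $$ (i, N) = (if i = 0 then [:- p (Suc N, 1):] else 0)"
  by (simp add: char_poly_matrix_index[OF comp_matrix_carrier] A'_index_new_col)

lemma minor_poly_leaf:
  "minor_poly (A' p) (Suc N) 1 = Polynomial.smult ((-1) ^ N * p (Suc N, 1)) (minor_poly (A p) 1 1)"
proof -
  let ?X = "char_poly_matrix (A p)" and ?X' = "char_poly_matrix (A' p)"
  define R where "R = mat_delete ?X' N 0"
  have X: "?X \<in> carrier_mat N N" and X': "?X' \<in> carrier_mat (Suc N) (Suc N)"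
    by simp_all
  have R: "R \<in> carrier_mat N N"
    using mat_delete_carrier[OF X'] by (simp add: R_def)
  have R_index: "R $$ (i, j) = ?X' $$ (i, Suc j)" if "i < N" "j < N" for i j
    using that X' by (simp add: R_def mat_delete_index')
  have N: "0 < N" "Suc (N - 1) = N" using two_le_N by auto
  have last_col: "R $$ (i, N - 1) = (if i = 0 then [:- p (Suc N, 1):] else 0)" if "i < N" for i
    using that N by (simp add: R_index char_poly_matrix_A'_index_new_col)
  have "mat_delete R 0 (N - 1) = mat_delete ?X 0 0"
    using R X X' N by (intro eq_matI) (auto simp: mat_delete_index' R_index char_poly_matrix_A'_index_old)
  then have "cofactor R 0 (N - 1) = (-1) ^ (N - 1) * minor_poly (A p) 1 1"
    by (simp add: cofactor_def minor_poly_def)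
  moreover have "det R = R $$ (0, N - 1) * cofactor R 0 (N - 1)"
    using N last_col by (intro laplace_expansion_column_single[OF R]) auto
  moreover have "(-1 :: real) ^ N = - ((-1) ^ (N - 1))"
    by (metis N(2) power_Suc mult_minus1)
  ultimately show ?thesis
    using last_col N by (simp add: R_def minor_poly_def poly_neg_one_power)
qed

lemma char_poly_leaf:
  "char_poly (A' p) =
     [:p (Suc N, 1), 1:] * char_poly (A p) + Polynomial.smult (p (1, Suc N)) (pCons 0 (minor_poly (A p) 1 1))"
proof -
  let ?X = "char_poly_matrix (A p)" and ?X' = "char_poly_matrix (A' p)"
  let ?\<alpha> = "p (Suc N, 1)" and ?\<beta> = "p (1, Suc N)" and ?D = "minor_poly (A p) 1 1"
  have X: "?X \<in> carrier_mat N N" and X': "?X' \<in> carrier_mat (Suc N) (Suc N)"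
    by simp_all
  have N: "0 < N" using two_le_N by simp
  \<comment> \<open>Without the leaf row and column, xI - A' is xI - A with an extra a_n1 in the corner.\<close>
  define Q where "Q = mat_delete ?X' N N"
  have Q: "Q \<in> carrier_mat N N"
    using mat_delete_carrier[OF X'] by (simp add: Q_def)
  have Q_index: "Q $$ (i, j) = ?X' $$ (i, j)" if "i < N" "j < N" for i j
    using that by (simp add: Q_def mat_delete_index')
  have "det Q = det ?X + (Q $$ (0, 0) - ?X $$ (0, 0)) * det (mat_delete ?X 0 0)"
    by (rule det_add_corner[OF Q X N]) (simp add: Q_index char_poly_matrix_A'_index_old)
  moreover have "Q $$ (0, 0) = ?X $$ (0, 0) + [:?\<beta>:]"
    using N by (simp add: Q_index char_poly_matrix_A'_index_corner)
  moreover have "cofactor ?X' N N = det Q"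
    by (simp add: cofactor_def Q_def flip: mult_2)
  ultimately have cof_NN: "cofactor ?X' N N = char_poly (A p) + [:?\<beta>:] * ?D"
    by (simp add: char_poly_def minor_poly_def)
  have cof_N0: "cofactor ?X' N 0 = (-1) ^ N * minor_poly (A' p) (Suc N) 1"
    by (simp add: cofactor_def minor_poly_def)
  have "char_poly (A' p) = (\<Sum>j<Suc N. ?X' $$ (N, j) * cofactor ?X' N j)"
    unfolding char_poly_def by (rule laplace_expansion_row[OF X']) simp
  also have "\<dots> = (\<Sum>j\<in>{0, N}. ?X' $$ (N, j) * cofactor ?X' N j)"
    by (rule sum.mono_neutral_right) (auto simp: char_poly_matrix_A'_index_new_row)
  also have "\<dots> = [:- ?\<beta>:] * cofactor ?X' N 0 + [:?\<alpha>, 1:] * cofactor ?X' N N"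
    using N by (simp add: char_poly_matrix_A'_index_new_row)
  also have "\<dots> = [:?\<alpha>, 1:] * char_poly (A p) + Polynomial.smult ?\<beta> (pCons 0 ?D)"
    unfolding cof_NN cof_N0 minor_poly_leaf
    by (cases "even N") (simp_all add: poly_neg_one_power algebra_simps smult_add_right)
  finally show ?thesis .
qed

definition char_coeff :: "params \<Rightarrow> nat \<Rightarrow> real" where
  "char_coeff p j = coeff (char_poly (A p)) j"

definition minor_coeff :: "params \<Rightarrow> nat \<Rightarrow> real" where
  "minor_coeff p j = coeff (minor_poly (A p) 1 1) j"

lemma coeff_char_poly_leaf:
  "coeff (char_poly (A' p)) j =
     (if j = 0 then 0 else char_coeff p (j - 1) + p (1, Suc N) * minor_coeff p (j - 1))
     + p (Suc N, 1) * char_coeff p j"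
  by (cases j) (simp_all add: char_poly_leaf char_coeff_def minor_coeff_def algebra_simps)

lemma coeff_minor_poly_leaf:
  "coeff (minor_poly (A' p) (Suc N) 1) j = (-1) ^ N * p (Suc N, 1) * minor_coeff p j"
  unfolding minor_poly_leaf minor_coeff_def by simp

lemma char_coeff_0: "char_coeff p 0 = 0"
  using coeff_0_char_poly_comp_matrix[OF graph] two_le_N by (simp add: char_coeff_def)

lemma char_coeff_top: "N \<le> j \<Longrightarrow> char_coeff p j = (if j = N then 1 else 0)"
  using degree_monic_char_poly[OF comp_matrix_carrier, of N E "{}" p]
  by (auto simp: char_coeff_def coeff_eq_0)

lemma minor_coeff_top:
  assumes "N - 1 \<le> j"
  shows "minor_coeff p j = (if j = N - 1 then 1 else 0)"
proof -
  have "mat_delete (char_poly_matrix (A p)) 0 0 = char_poly_matrix (mat_delete (A p) 0 0)"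
    using two_le_N by (intro mat_delete_char_poly_matrix[OF comp_matrix_carrier]) simp
  then have "minor_poly (A p) 1 1 = char_poly (mat_delete (A p) 0 0)"
    by (simp add: minor_poly_def char_poly_def)
  moreover have "mat_delete (A p) 0 0 \<in> carrier_mat (N - 1) (N - 1)"
    by (rule mat_delete_carrier) simp
  ultimately show ?thesis
    using assms degree_monic_char_poly by (auto simp: minor_coeff_def coeff_eq_0)
qed

lemma minor_poly_nonzero: "minor_poly (A p) 1 1 \<noteq> 0"
  using minor_coeff_top[of "N - 1" p] by (auto simp: minor_coeff_def)

lemma real_polynomial_function_char_coeff: "real_polynomial_function (\<lambda>t. char_coeff (p(l := t)) j)"
  using polynomial_coeffs_char_poly_comp_matrix by (simp add: polynomial_coeffs_def char_coeff_def)

lemma real_polynomial_function_minor_coeff: "real_polynomial_function (\<lambda>t. minor_coeff (p(l := t)) j)"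
  using polynomial_coeffs_minor_poly_comp_matrix by (simp add: polynomial_coeffs_def minor_coeff_def)

lemma A_upd_notin_E: "l \<notin> E \<Longrightarrow> A (p(l := t)) = A p"
  by (intro comp_matrix_cong) (auto simp: lcm_params_def)

lemma char_coeff_upd_notin_E: "l \<notin> E \<Longrightarrow> char_coeff (p(l := t)) j = char_coeff p j"
  by (simp add: char_coeff_def A_upd_notin_E)

lemma minor_coeff_upd_notin_E: "l \<notin> E \<Longrightarrow> minor_coeff (p(l := t)) j = minor_coeff p j"
  by (simp add: minor_coeff_def A_upd_notin_E)

abbreviation dchar :: "params \<Rightarrow> nat \<times> nat \<Rightarrow> nat \<Rightarrow> real" where
  "dchar p l j \<equiv> partial_deriv (\<lambda>q. char_coeff q j) p l"

abbreviation dminor :: "params \<Rightarrow> nat \<times> nat \<Rightarrow> nat \<Rightarrow> real" where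
  "dminor p l j \<equiv> partial_deriv (\<lambda>q. minor_coeff q j) p l"

lemma dchar_const: "j = 0 \<or> N \<le> j \<Longrightarrow> dchar p l j = 0"
  by (intro partial_deriv_const) (auto simp: char_coeff_0 char_coeff_top)

lemma dminor_const: "N - 1 \<le> j \<Longrightarrow> dminor p l j = 0"
  by (intro partial_deriv_const) (simp add: minor_coeff_top)

abbreviation keys :: "(nat \<times> nat \<times> nat) set" where
  "keys \<equiv> io_keys N {1} {1}"

abbreviation keys' :: "(nat \<times> nat \<times> nat) set" where
  "keys' \<equiv> io_keys (Suc N) {Suc N} {1}"

abbreviation jac :: "params \<Rightarrow> nat \<times> nat \<Rightarrow> nat \<times> nat \<times> nat \<Rightarrow> real" where
  "jac p l key \<equiv> partial_deriv (io_coef N E {} key) p l"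

abbreviation jac' :: "params \<Rightarrow> nat \<times> nat \<Rightarrow> nat \<times> nat \<times> nat \<Rightarrow> real" where
  "jac' p l key \<equiv> partial_deriv (io_coef (Suc N) H {} key) p l"

lemma io_coef_char: "io_coef N E {} (1, 0, j) = (\<lambda>q. char_coeff q j)"
  by (simp add: fun_eq_iff io_coef_def char_coeff_def)

lemma io_coef_minor: "io_coef N E {} (1, 1, j) = (\<lambda>q. minor_coeff q j)"
  by (simp add: fun_eq_iff io_coef_def minor_coeff_def)

lemma io_coef_char_leaf: "io_coef (Suc N) H {} (1, 0, j) = (\<lambda>q. coeff (char_poly (A' q)) j)"
  by (simp add: fun_eq_iff io_coef_def)

lemma io_coef_minor_leaf: "io_coef (Suc N) H {} (1, Suc N, j) = (\<lambda>q. q (Suc N, 1) * minor_coeff q j)"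
proof -
  have "io_coef (Suc N) H {} (1, Suc N, j) q = (-1) ^ (1 + Suc N) * coeff (minor_poly (A' q) (Suc N) 1) j" for q
    by (simp only: io_coef_def prod.case Suc_not_Zero if_False)
  then show ?thesis
    unfolding coeff_minor_poly_leaf by (cases "even N") (simp_all add: fun_eq_iff)
qed

lemma jac'_char_old_edge:
  assumes "l \<in> E"
  shows "jac' p l (1, 0, j) =
    (if j = 0 then 0 else dchar p l (j - 1) + p (1, Suc N) * dminor p l (j - 1)) + p (Suc N, 1) * dchar p l j"
proof -
  have "l \<noteq> (1, Suc N)" "l \<noteq> (Suc N, 1)" using assms new_vertex_notin_E by auto
  then show ?thesis
    unfolding io_coef_char_leaf coeff_char_poly_leaf
    by (intro partial_deriv_eqI)
       (auto intro!: derivative_eq_intros has_real_derivative_partial_deriv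
         real_polynomial_function_char_coeff real_polynomial_function_minor_coeff)
qed

lemma jac'_minor_old_edge:
  assumes "l \<in> E"
  shows "jac' p l (1, Suc N, j) = p (Suc N, 1) * dminor p l j"
proof -
  have "l \<noteq> (Suc N, 1)" using assms new_vertex_notin_E by auto
  then show ?thesis
    unfolding io_coef_minor_leaf
    by (intro partial_deriv_eqI)
       (auto intro!: derivative_eq_intros has_real_derivative_partial_deriv
         real_polynomial_function_minor_coeff)
qed

lemma jac'_char_from_leaf: "jac' p (Suc N, 1) (1, 0, j) = char_coeff p j"
proof -
  have upd: "coeff (char_poly (A' (p((Suc N, 1) := t)))) j =
      coeff (char_poly (A' p)) j + (t - p (Suc N, 1)) * char_coeff p j" for t
    using two_le_N new_vertex_notin_E
    by (simp add: coeff_char_poly_leaf char_coeff_upd_notin_E minor_coeff_upd_notin_E algebra_simps)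
  show ?thesis
    unfolding io_coef_char_leaf
    by (intro partial_deriv_eqI, simp only: upd) (auto intro!: derivative_eq_intros)
qed

lemma jac'_minor_from_leaf: "jac' p (Suc N, 1) (1, Suc N, j) = minor_coeff p j"
proof -
  have upd: "(p((Suc N, 1) := t)) (Suc N, 1) * minor_coeff (p((Suc N, 1) := t)) j = t * minor_coeff p j" for t
    using new_vertex_notin_E by (simp add: minor_coeff_upd_notin_E)
  show ?thesis
    unfolding io_coef_minor_leaf
    by (intro partial_deriv_eqI, simp only: upd) (auto intro!: derivative_eq_intros)
qed

lemma jac'_char_to_leaf: "jac' p (1, Suc N) (1, 0, j) = (if j = 0 then 0 else minor_coeff p (j - 1))"
proof -
  have upd: "coeff (char_poly (A' (p((1, Suc N) := t)))) j =
      coeff (char_poly (A' p)) j + (t - p (1, Suc N)) * (if j = 0 then 0 else minor_coeff p (j - 1))" for t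
    using two_le_N new_vertex_notin_E
    by (simp add: coeff_char_poly_leaf char_coeff_upd_notin_E minor_coeff_upd_notin_E algebra_simps)
  show ?thesis
    unfolding io_coef_char_leaf
    by (intro partial_deriv_eqI, simp only: upd) (auto intro!: derivative_eq_intros)
qed

lemma jac'_minor_to_leaf: "jac' p (1, Suc N) (1, Suc N, j) = 0"
  unfolding io_coef_minor_leaf
  using new_vertex_notin_E two_le_N
  by (intro partial_deriv_const) (simp add: minor_coeff_upd_notin_E)

lemma jac_char_sum: "(\<Sum>l\<in>I. w l * jac p l (1, 0, j)) = (\<Sum>l\<in>I. w l * dchar p l j)"
  by (simp only: io_coef_char)

lemma jac_minor_sum: "(\<Sum>l\<in>I. w l * jac p l (1, 1, j)) = (\<Sum>l\<in>I. w l * dminor p l j)"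
  by (simp only: io_coef_minor)

lemma jac'_char_old_edge_sum:
  assumes "I \<subseteq> E"
  shows "(\<Sum>l\<in>I. w l * jac' p l (1, 0, j)) =
    (if j = 0 then 0
     else (\<Sum>l\<in>I. w l * dchar p l (j - 1)) + p (1, Suc N) * (\<Sum>l\<in>I. w l * dminor p l (j - 1)))
    + p (Suc N, 1) * (\<Sum>l\<in>I. w l * dchar p l j)"
proof -
  have "(\<Sum>l\<in>I. w l * jac' p l (1, 0, j)) = (\<Sum>l\<in>I. w l *
      ((if j = 0 then 0 else dchar p l (j - 1) + p (1, Suc N) * dminor p l (j - 1)) + p (Suc N, 1) * dchar p l j))"
    using assms by (intro sum.cong refl, subst jac'_char_old_edge) auto
  then show ?thesis
    by (cases "j = 0") (simp_all add: sum.distrib sum_distrib_left algebra_simps)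
qed

lemma jac'_minor_old_edge_sum:
  assumes "I \<subseteq> E"
  shows "(\<Sum>l\<in>I. w l * jac' p l (1, Suc N, j)) = p (Suc N, 1) * (\<Sum>l\<in>I. w l * dminor p l j)"
proof -
  have "(\<Sum>l\<in>I. w l * jac' p l (1, Suc N, j)) = (\<Sum>l\<in>I. w l * (p (Suc N, 1) * dminor p l j))"
    using assms by (intro sum.cong refl, subst jac'_minor_old_edge) auto
  then show ?thesis by (simp add: sum_distrib_left algebra_simps)
qed

lemma jac'_relation_of_jac_relation:
  assumes I: "I \<subseteq> E" and rel: "\<forall>k\<in>keys. (\<Sum>l\<in>I. w l * jac p l k) = 0"
  shows "\<forall>k\<in>keys'. (\<Sum>l\<in>I. w l * jac' p l k) = 0"
proof
  have char: "(\<Sum>l\<in>I. w l * dchar p l j) = 0" for j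
  proof (cases "j \<le> N")
    case True
    then have "(1, 0, j) \<in> keys" by (simp add: io_keys_def)
    with rel show ?thesis unfolding jac_char_sum[symmetric] by blast
  qed (simp add: dchar_const)
  have minor: "(\<Sum>l\<in>I. w l * dminor p l j) = 0" for j
  proof (cases "j < N")
    case True
    then have "(1, 1, j) \<in> keys" by (simp add: io_keys_def)
    with rel show ?thesis unfolding jac_minor_sum[symmetric] by blast
  qed (simp add: dminor_const)
  fix k assume "k \<in> keys'"
  then consider j where "k = (1, 0, j)" | j where "k = (1, Suc N, j)"
    by (auto simp: io_keys_def)
  then show "(\<Sum>l\<in>I. w l * jac' p l k) = 0"
  proof cases
    case 1
    show ?thesis unfolding 1 jac'_char_old_edge_sum[OF I] char minor by simp
  next
    case 2
    show ?thesis unfolding 2 jac'_minor_old_edge_sum[OF I] minor by simp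
  qed
qed

text \<open>The hypothesis says (x + \<alpha>) G(x) + a x D(x) = 0, where G(x) = \<Sum>j. S j x^j,
  \<alpha> = p (Suc N, 1) and D is the minor; evaluating at x = -\<alpha> forces a = 0, and then G = 0.\<close>
lemma shifted_relation_trivial:
  fixes S :: "nat \<Rightarrow> real"
  assumes nonzero: "p (Suc N, 1) \<noteq> 0"
    and no_root: "poly (minor_poly (A p) 1 1) (- p (Suc N, 1)) \<noteq> 0"
    and S_top: "\<And>j. N \<le> j \<Longrightarrow> S j = 0"
    and rel: "\<And>j. j \<le> Suc N \<Longrightarrow>
      p (Suc N, 1) * S j + (if j = 0 then 0 else S (j - 1) + a * minor_coeff p (j - 1)) = 0"
  shows "a = 0 \<and> (\<forall>j. S j = 0)"
proof -
  define \<alpha> where "\<alpha> = p (Suc N, 1)"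
  define G where "G = Poly (map S [0..<N])"
  have coeff_G: "coeff G j = S j" for j
    by (cases "j < N") (simp_all add: G_def nth_default_def S_top)
  define P where "P = [:\<alpha>, 1:] * G + Polynomial.smult a (pCons 0 (minor_poly (A p) 1 1))"
  have "P = 0"
  proof (rule poly_eqI)
    fix j
    have "coeff P j = \<alpha> * S j + (if j = 0 then 0 else S (j - 1) + a * minor_coeff p (j - 1))"
      by (cases j) (simp_all add: P_def coeff_G minor_coeff_def algebra_simps)
    also have "\<dots> = 0"
    proof (cases "j \<le> Suc N")
      case False
      then show ?thesis by (simp add: S_top minor_coeff_top)
    qed (use rel in \<open>simp add: \<alpha>_def\<close>)
    finally show "coeff P j = coeff 0 j" by simp
  qed
  then have "poly P (- \<alpha>) = 0" by simp
  then have a: "a = 0"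
    using nonzero no_root by (simp add: P_def \<alpha>_def)
  with \<open>P = 0\<close> have "[:\<alpha>, 1:] * G = 0" by (simp add: P_def)
  then have "G = 0" by (metis mult_eq_0_iff pCons_eq_0_iff one_neq_zero)
  with a coeff_G show ?thesis by (metis coeff_0)
qed

lemma jac_relation_of_jac'_relation:
  assumes I: "I \<subseteq> E" and nonzero: "p (Suc N, 1) \<noteq> 0"
    and no_root: "poly (minor_poly (A p) 1 1) (- p (Suc N, 1)) \<noteq> 0"
    and rel: "\<forall>k\<in>keys'. (\<Sum>l\<in>I. w l * jac' p l k) + a * jac' p (1, Suc N) k + b * jac' p (Suc N, 1) k = 0"
  shows "a = 0 \<and> b = 0 \<and> (\<forall>k\<in>keys. (\<Sum>l\<in>I. w l * jac p l k) = 0)"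
proof -
  define SC where "SC j = (\<Sum>l\<in>I. w l * dchar p l j)" for j
  define SD where "SD j = (\<Sum>l\<in>I. w l * dminor p l j)" for j
  have SC_eq: "(\<Sum>l\<in>I. w l * dchar p l j) = SC j" and SD_eq: "(\<Sum>l\<in>I. w l * dminor p l j) = SD j" for j
    by (simp_all add: SC_def SD_def)
  have minor_rel: "p (Suc N, 1) * SD j + b * minor_coeff p j = 0" if "j \<le> N" for j
  proof -
    have "(1, Suc N, j) \<in> keys'" using that by (simp add: io_keys_def)
    with rel have "(\<Sum>l\<in>I. w l * jac' p l (1, Suc N, j)) + a * jac' p (1, Suc N) (1, Suc N, j)
        + b * jac' p (Suc N, 1) (1, Suc N, j) = 0" by blast
    then show ?thesis
      unfolding jac'_minor_old_edge_sum[OF I] jac'_minor_to_leaf jac'_minor_from_leaf SD_eq by simp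
  qed
  have b: "b = 0"
    using minor_rel[of "N - 1"] minor_coeff_top[of "N - 1" p] by (simp add: SD_def dminor_const)
  have SD0: "SD j = 0" for j
  proof (cases "j \<le> N")
    case True
    then show ?thesis using minor_rel[OF True] b nonzero by simp
  qed (simp add: SD_def dminor_const)
  have "p (Suc N, 1) * SC j + (if j = 0 then 0 else SC (j - 1) + a * minor_coeff p (j - 1)) = 0"
    if "j \<le> Suc N" for j
  proof -
    have "(1, 0, j) \<in> keys'" using that by (simp add: io_keys_def)
    with rel have "(\<Sum>l\<in>I. w l * jac' p l (1, 0, j)) + a * jac' p (1, Suc N) (1, 0, j)
        + b * jac' p (Suc N, 1) (1, 0, j) = 0" by blast
    then show ?thesis
      unfolding jac'_char_old_edge_sum[OF I] jac'_char_to_leaf jac'_char_from_leaf SC_eq SD_eq SD0 b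
      by (cases "j = 0") (simp_all add: algebra_simps)
  qed
  then have a: "a = 0" and SC0: "SC j = 0" for j
    using shifted_relation_trivial[OF nonzero no_root, of SC a] by (auto simp: SC_def dchar_const)
  have "\<forall>k\<in>keys. (\<Sum>l\<in>I. w l * jac p l k) = 0"
  proof
    fix k assume "k \<in> keys"
    then consider j where "k = (1, 0, j)" | j where "k = (1, 1, j)"
      by (auto simp: io_keys_def)
    then show "(\<Sum>l\<in>I. w l * jac p l k) = 0"
      by cases (simp_all only: jac_char_sum jac_minor_sum SC_eq SD_eq SC0 SD0)
  qed
  with a b show ?thesis by blast
qed

lemma family_rank_jac'_le: "family_rank keys' H (jac' p) \<le> family_rank keys E (jac p) + 2"
proof -
  have "family_rank keys' (E \<union> {(1, Suc N), (Suc N, 1)}) (jac' p)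
      \<le> family_rank keys E (jac p) + card {(1, Suc N), (Suc N, 1)}"
    by (rule family_rank_union_le[OF finite_E]) (simp_all add: jac'_relation_of_jac_relation)
  then show ?thesis
    using two_le_N by (simp add: H_eq)
qed

lemma family_rank_jac'_ge:
  assumes "p (Suc N, 1) \<noteq> 0" "poly (minor_poly (A p) 1 1) (- p (Suc N, 1)) \<noteq> 0"
  shows "family_rank keys E (jac p) + 2 \<le> family_rank keys' H (jac' p)"
proof -
  obtain I where I: "I \<subseteq> E" "lin_indep_family keys I (jac p)" "card I = family_rank keys E (jac p)"
    using family_rank_witness[OF finite_E] by blast
  have "card I + 2 \<le> family_rank keys' (E \<union> {(1, Suc N), (Suc N, 1)}) (jac' p)"
  proof (rule family_rank_insert2_ge[OF finite_E _ _ _ I(1,2)])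
    show "(1, Suc N) \<notin> E" "(Suc N, 1) \<notin> E" "(1, Suc N) \<noteq> (Suc N, 1)"
      using new_vertex_notin_E two_le_N by auto
  qed (rule jac_relation_of_jac'_relation[OF I(1) assms])
  then show ?thesis
    using I(3) by (simp add: H_eq)
qed

lemma family_rank_jac_upd_notin_E:
  assumes "e \<notin> E"
  shows "family_rank keys E (jac (p(e := t))) = family_rank keys E (jac p)"
proof (rule family_rank_cong)
  fix l key assume "l \<in> E"
  then have "e \<noteq> l" using assms by blast
  then have "A (p(e := t, l := s)) = A (p(l := s))" for s
    using A_upd_notin_E[OF assms, of "p(l := s)"] by (simp add: fun_upd_twist)
  then have "io_coef N E {} key (p(e := t, l := s)) = io_coef N E {} key (p(l := s))" for s
    unfolding io_coef_def by (simp only:)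
  then show "jac (p(e := t)) l key = jac p l key"
    using \<open>e \<noteq> l\<close> by (simp add: partial_deriv_def)
qed

theorem generic_jacobian_rank_leaf:
  "generic_jacobian_rank (Suc N) H {Suc N} {1} {} = generic_jacobian_rank N E {1} {1} {} + 2"
proof -
  have finite_H: "finite H" using finite_E by (simp add: H_eq)
  have "jacobian_rank N E {1} {1} {} = (\<lambda>p. family_rank keys E (jac p))"
    using jacobian_rank_eq_family_rank[of E "{}"] finite_E by (auto simp: lcm_params_def)
  moreover have "jacobian_rank (Suc N) H {Suc N} {1} {} = (\<lambda>p. family_rank keys' H (jac' p))"
    using jacobian_rank_eq_family_rank[of H "{}"] finite_H by (auto simp: lcm_params_def)
  moreover have "Max (range (\<lambda>p. family_rank keys' H (jac' p))) =
      Max (range (\<lambda>p. family_rank keys E (jac p))) + 2"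
  proof (rule Max_range_eq_add)
    show "finite (range (\<lambda>p. family_rank keys E (jac p)))"
      by (rule finite_subset[of _ "{..card E}"]) (auto simp: family_rank_le_card[OF finite_E])
    show "family_rank keys' H (jac' p) \<le> family_rank keys E (jac p) + 2" for p
      by (rule family_rank_jac'_le)
    show "\<exists>q. family_rank keys E (jac p) + 2 \<le> family_rank keys' H (jac' q)" for p
    proof -
      \<comment> \<open>Changing a_1n = p (Suc N, 1) leaves M untouched; make it nonzero and not a root of -D.\<close>
      let ?D = "minor_poly (A p) 1 1"
      have "finite (insert 0 (uminus ` {x. poly ?D x = 0}))"
        using poly_roots_finite[OF minor_poly_nonzero] by simp
      then obtain \<alpha> :: real where \<alpha>: "\<alpha> \<notin> insert 0 (uminus ` {x. poly ?D x = 0})"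
        using ex_new_if_finite[OF infinite_UNIV_char_0] by blast
      then have \<alpha>_good: "\<alpha> \<noteq> 0" "poly ?D (- \<alpha>) \<noteq> 0"
        by (auto intro: rev_image_eqI)
      define q where "q = p((Suc N, 1) := \<alpha>)"
      have "A q = A p"
        unfolding q_def by (rule A_upd_notin_E[OF new_vertex_notin_E(2)])
      then have "family_rank keys E (jac q) + 2 \<le> family_rank keys' H (jac' q)"
        using \<alpha>_good by (intro family_rank_jac'_ge) (simp_all add: q_def)
      moreover have "family_rank keys E (jac q) = family_rank keys E (jac p)"
        unfolding q_def by (rule family_rank_jac_upd_notin_E[OF new_vertex_notin_E(2)])
      ultimately show ?thesis by auto
    qed
  qed
  ultimately show ?thesis by (simp add: generic_jacobian_rank_def)
qed

end

theorem proposition4p15: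
  fixes n :: nat and E :: "(nat \<times> nat) set"
  assumes n3: "n \<ge> 3"
    and G: "lcm_graph (n - 1) E"
    and sc: "strongly_connected (n - 1) E"
  defines "H \<equiv> add_leaf_edge n E 1"
  shows
   "(\<forall>p :: params.
      let A = comp_matrix (n - 1) E {} p; A' = comp_matrix n H {} p;
          c = (\<lambda>i. coeff (char_poly A) i);
          d = (\<lambda>i. coeff (minor_poly A 1 1) i);
          cs = (\<lambda>i. coeff (char_poly A') i);
          ds = (\<lambda>i. coeff (minor_poly A' n 1) i);
          a1n = p (n, 1); an1 = p (1, n)
      in (\<forall>i \<le> n - 2. ds i = (-1) ^ (n - 1) * a1n * d i)
       \<and> (\<forall>i\<in>{1..n - 1}. cs i = c (i - 1) + a1n * c i + an1 * d (i - 1))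
       \<and> cs 0 = 0 \<and> c 0 = 0)
    \<and> generic_jacobian_rank n H {n} {1} {} = generic_jacobian_rank (n - 1) E {1} {1} {} + 2"
proof -
  obtain N where n: "n = Suc N" using n3 by (cases n) auto
  have leaf: "leaf_extension N E"
    using n3 G by unfold_locales (simp_all add: n)
  have H: "H = leaf_extension.H N E"
    by (simp add: H_def leaf_extension.H_def[OF leaf] n)
  show ?thesis
    using leaf_extension.coeff_char_poly_leaf[OF leaf] leaf_extension.coeff_minor_poly_leaf[OF leaf]
      leaf_extension.char_coeff_0[OF leaf] leaf_extension.generic_jacobian_rank_leaf[OF leaf]
    unfolding n H Let_def leaf_extension.char_coeff_def[OF leaf] leaf_extension.minor_coeff_def[OF leaf]
    by simp
qed

end
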